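(* Let $n$ be a positive integer and let $Cl$ be a clique (complete graph) on $\sqrt{n}$ nodes, whose edges carry local port labels at each endpoint. Suppose each node of $Cl$ has a whiteboard of $O(\log n)$ bits of storage and two mobile agents, each with $O(\log n)$ bits of memory, operate in $Cl$. Then the two agents cannot construct the map of $Cl$.
   Context: Constructing the map of a graph means that the agents compute (store) a copy of the graph including all of its port labels. Agents can read and write the whiteboards of the nodes they visit; the only storage available is the agents' memory and the nodes' whiteboards. *)

theory Defs
  imports Complex_Main
begin

text \<open>A port labelling P assigns to each
 node v a bijection P v from its neighbours {u. u < m, u \<noteq> v} to the local
 port numbers {0..<m-1}; P v u is the port at v of the edge {v,u}.\<close>

definition valid_labeling :: "nat \<Rightarrow> (nat \<Rightarrow> nat \<Rightarrow> nat) \<Rightarrow> bool" where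
  "valid_labeling m P \<longleftrightarrow> (\<forall>v<m. bij_betw (P v) {u. u < m \<and> u \<noteq> v} {0..<m-1})"

text \<open>Two port-labelled cliques are the same map if they are isomorphic
 (node names are irrelevant, port labels must be preserved).\<close>

definition iso_labeling :: "nat \<Rightarrow> (nat \<Rightarrow> nat \<Rightarrow> nat) \<Rightarrow> (nat \<Rightarrow> nat \<Rightarrow> nat) \<Rightarrow> bool" where
  "iso_labeling m Q P \<longleftrightarrow> (\<exists>\<sigma>. bij_betw \<sigma> {..<m} {..<m} \<and>
      (\<forall>u<m. \<forall>v<m. u \<noteq> v \<longrightarrow> Q (\<sigma> u) (\<sigma> v) = P u v))"

definition dest :: "(nat \<Rightarrow> nat \<Rightarrow> nat) \<Rightarrow> nat \<Rightarrow> nat \<Rightarrow> nat \<Rightarrow> nat" where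
  "dest P m v p = (THE u. u < m \<and> u \<noteq> v \<and> P v u = p)"

text \<open>A deterministic two-agent algorithm (agents are named False / True).
 Agent memories and whiteboards are natural numbers (bit strings).
 delta: (memory, whiteboard content) \<mapsto> (new memory, new whiteboard content, action),
   action None = stay, Some p = leave via port p;
 arrive: memory update on arrival, given the entry port;
 decode: computes the map from a snapshot of all storage (agent memories, whiteboards).\<close>

record agent_alg =
  init :: "bool \<Rightarrow> nat"
  delta :: "nat \<Rightarrow> nat \<Rightarrow> nat \<times> nat \<times> nat option"
  arrive :: "nat \<Rightarrow> nat \<Rightarrow> nat"
  decode :: "(bool \<Rightarrow> nat) \<Rightarrow> (nat \<Rightarrow> nat) \<Rightarrow> (nat \<Rightarrow> nat \<Rightarrow> nat)"

type_synonym config = "(bool \<Rightarrow> nat) \<times> (bool \<Rightarrow> nat) \<times> (nat \<Rightarrow> nat)"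
  (* positions, memories, whiteboards *)

definition step :: "agent_alg \<Rightarrow> (nat \<Rightarrow> nat \<Rightarrow> nat) \<Rightarrow> nat \<Rightarrow> bool \<Rightarrow> config \<Rightarrow> config" where
  "step A P m i cfg = (case cfg of (pos, mem, wb) \<Rightarrow>
     (case delta A (mem i) (wb (pos i)) of (s', w', act) \<Rightarrow>
        (case act of
           None \<Rightarrow> (pos, mem(i := s'), wb(pos i := w'))
         | Some p \<Rightarrow>
             (if p < m - 1 then
                (let u = dest P m (pos i) p
                 in (pos(i := u), mem(i := arrive A s' (P u (pos i))), wb(pos i := w')))
              else (pos, mem(i := s'), wb(pos i := w'))))))"

text \<open>Execution: sched P t is the agent acting at step t (arbitrary, possibly
 depending on the instance); start gives the initial nodes; whiteboards start blank.\<close>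

primrec run :: "agent_alg \<Rightarrow> ((nat \<Rightarrow> nat \<Rightarrow> nat) \<Rightarrow> nat \<Rightarrow> bool) \<Rightarrow> (bool \<Rightarrow> nat)
                 \<Rightarrow> (nat \<Rightarrow> nat \<Rightarrow> nat) \<Rightarrow> nat \<Rightarrow> nat \<Rightarrow> config" where
  "run A sched start P m 0 = (start, init A, (\<lambda>_. 0))"
| "run A sched start P m (Suc t) = step A P m (sched P t) (run A sched start P m t)"

text \<open>The algorithm, using at most B bits of agent memory and B bits per whiteboard,
 constructs the map of every port-labelled clique on m nodes: on every instance the
 storage bounds hold at all times, and at some time the storage snapshot decodes
 to (a copy of) the map.\<close>

definition constructs_map :: "nat \<Rightarrow> nat \<Rightarrow> agent_alg \<Rightarrow> ((nat \<Rightarrow> nat \<Rightarrow> nat) \<Rightarrow> nat \<Rightarrow> bool)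
                               \<Rightarrow> (bool \<Rightarrow> nat) \<Rightarrow> bool" where
  "constructs_map m B A sched start \<longleftrightarrow>
     (\<forall>P. valid_labeling m P \<longrightarrow>
        (\<forall>t i. fst (snd (run A sched start P m t)) i < 2 ^ B) \<and>
        (\<forall>t v. snd (snd (run A sched start P m t)) v < 2 ^ B) \<and>
        (\<exists>t. iso_labeling m
               (decode A (fst (snd (run A sched start P m t))) (snd (snd (run A sched start P m t)))) P))"

end

theory Submission
  imports Defs "HOL-Combinatorics.Permutations"
begin

text \<open>The map is decoded from a single storage snapshot: two agent memories and m
 whiteboards of B bits each. Hence at most (2^B)^(m+2) maps are ever output, and each of
 them is isomorphic to at most m! labelled cliques. Choosing independently a permutation of
 the ports at every node, however, yields ((m-1)!)^m pairwise distinct labelled cliques. For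
 B = O(log m) the first count is m^O(m), which is eventually smaller than the second one,
 m^Theta(m^2), so some labelled clique is never mapped correctly.\<close>

subsection \<open>Executions stay inside the clique\<close>

lemma dest_less:
  assumes "valid_labeling m P" "v < m" "p < m - 1"
  shows "dest P m v p < m"
proof -
  have bij: "bij_betw (P v) {u. u < m \<and> u \<noteq> v} {0..<m-1}"
    using assms(1,2) unfolding valid_labeling_def by blast
  then have "p \<in> P v ` {u. u < m \<and> u \<noteq> v}"
    using assms(3) bij_betw_imp_surj_on by fastforce
  then obtain u where u: "u < m" "u \<noteq> v" "P v u = p" by blast
  have "w = u" if "w < m \<and> w \<noteq> v \<and> P v w = p" for w
    using inj_onD[OF bij_betw_imp_inj_on[OF bij], of w u] that u by simp
  with u have "dest P m v p = u"
    unfolding dest_def by (intro the_equality) blast+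
  with u show ?thesis by simp
qed

definition config_in_clique :: "nat \<Rightarrow> config \<Rightarrow> bool" where
  "config_in_clique m cfg \<longleftrightarrow>
     (\<forall>i. fst cfg i < m) \<and> (\<forall>v. m \<le> v \<longrightarrow> snd (snd cfg) v = 0)"

lemma config_in_clique_step:
  assumes "valid_labeling m P" "config_in_clique m cfg"
  shows "config_in_clique m (step A P m i cfg)"
proof -
  obtain pos mem wb where cfg: "cfg = (pos, mem, wb)" by (cases cfg)
  obtain s' w' act where act: "delta A (mem i) (wb (pos i)) = (s', w', act)"
    by (cases "delta A (mem i) (wb (pos i))")
  from assms(2) have pos: "\<forall>j. pos j < m" and wb: "\<forall>v. m \<le> v \<longrightarrow> wb v = 0"
    by (simp_all add: cfg config_in_clique_def)
  have "pos i < m" using pos by blast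
  with wb have "\<forall>v. m \<le> v \<longrightarrow> (wb(pos i := w')) v = 0" by auto
  moreover have "dest P m (pos i) p < m" if "p < m - 1" for p
    using dest_less[OF assms(1) _ that] pos by blast
  ultimately show ?thesis
    using pos by (cases act) (simp_all add: cfg act config_in_clique_def step_def Let_def)
qed

lemma config_in_clique_run:
  assumes "valid_labeling m P" "\<forall>i. start i < m"
  shows "config_in_clique m (run A sched start P m t)"
proof (induction t)
  case 0
  show ?case using assms(2) by (simp add: config_in_clique_def)
next
  case (Suc t)
  then show ?case by (simp add: config_in_clique_step[OF assms(1)])
qed

subsection \<open>Many distinct labelled cliques\<close>

definition skip_node :: "nat \<Rightarrow> nat \<Rightarrow> nat" where
  "skip_node v u = (if u < v then u else u - 1)"

lemma bij_betw_skip_node: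
  "v < m \<Longrightarrow> bij_betw (skip_node v) {u. u < m \<and> u \<noteq> v} {0..<m-1}"
  by (rule bij_betw_byWitness[where f'="\<lambda>x. if x < v then x else x + 1"])
     (auto simp: skip_node_def)

text \<open>Node v numbers its neighbours in increasing order and then permutes the numbers
 by \<pi> v.\<close>

definition labeling_of_perms :: "nat \<Rightarrow> (nat \<Rightarrow> nat \<Rightarrow> nat) \<Rightarrow> nat \<Rightarrow> nat \<Rightarrow> nat" where
  "labeling_of_perms m \<pi> = (\<lambda>v u. if v < m \<and> u < m \<and> u \<noteq> v then \<pi> v (skip_node v u) else 0)"

definition port_perms :: "nat \<Rightarrow> (nat \<Rightarrow> nat \<Rightarrow> nat) set" where
  "port_perms m = (\<Pi>\<^sub>E v\<in>{..<m}. {p. p permutes {..<m-1}})"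

lemma valid_labeling_of_perms:
  assumes "\<pi> \<in> port_perms m"
  shows "valid_labeling m (labeling_of_perms m \<pi>)"
  unfolding valid_labeling_def
proof (intro allI impI)
  fix v assume v: "v < m"
  with assms have "\<pi> v permutes {..<m-1}" by (auto simp: port_perms_def)
  then have "bij_betw (\<pi> v) {0..<m-1} {0..<m-1}"
    by (simp add: permutes_imp_bij flip: lessThan_atLeast0)
  then have "bij_betw (\<pi> v \<circ> skip_node v) {u. u < m \<and> u \<noteq> v} {0..<m-1}"
    using bij_betw_trans[OF bij_betw_skip_node[OF v]] by blast
  then show "bij_betw (labeling_of_perms m \<pi> v) {u. u < m \<and> u \<noteq> v} {0..<m-1}"
    by (rule bij_betw_cong[THEN iffD1, rotated]) (auto simp: labeling_of_perms_def v)
qed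

lemma inj_on_labeling_of_perms: "inj_on (labeling_of_perms m) (port_perms m)"
proof (rule inj_onI, rule ext, rule ext)
  fix \<pi> \<pi>' v x
  assume perms: "\<pi> \<in> port_perms m" "\<pi>' \<in> port_perms m"
    and eq: "labeling_of_perms m \<pi> = labeling_of_perms m \<pi>'"
  show "\<pi> v x = \<pi>' v x"
  proof (cases "v < m \<and> x < m - 1")
    case True
    then have v: "v < m" and x: "x < m - 1" by simp_all
    define u where "u = (if x < v then x else x + 1)"
    have u: "u < m" "u \<noteq> v" "skip_node v u = x"
      using v x by (cases "x < v") (simp_all add: u_def skip_node_def)
    have "labeling_of_perms m \<pi> v u = labeling_of_perms m \<pi>' v u" using eq by simp
    with u v show ?thesis by (simp add: labeling_of_perms_def)
  next
    case outside: False
    show ?thesis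
    proof (cases "v < m")
      case True
      with perms have "\<pi> v permutes {..<m-1}" "\<pi>' v permutes {..<m-1}"
        by (auto simp: port_perms_def)
      with True outside show ?thesis by (simp add: permutes_not_in)
    next
      case False
      then have "v \<notin> {..<m}" by simp
      with perms have "\<pi> v = undefined" "\<pi>' v = undefined"
        unfolding port_perms_def by (blast intro: PiE_arb)+
      then show ?thesis by simp
    qed
  qed
qed

lemma card_labelings_of_perms:
  "card (labeling_of_perms m ` port_perms m) = fact (m - 1) ^ m"
proof -
  have "card (labeling_of_perms m ` port_perms m) = card (port_perms m)"
    by (rule card_image[OF inj_on_labeling_of_perms])
  also have "\<dots> = (\<Prod>v<m. card {p. p permutes {..<m-1}})"
    by (simp add: port_perms_def card_PiE)
  also have "card {p. p permutes {..<m-1}} = fact (m - 1)"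
    by (rule card_permutations) auto
  finally show ?thesis by simp
qed

subsection \<open>Isomorphism classes are small\<close>

definition supported_on_clique :: "nat \<Rightarrow> (nat \<Rightarrow> nat \<Rightarrow> nat) \<Rightarrow> bool" where
  "supported_on_clique m P \<longleftrightarrow> (\<forall>u v. \<not> (u < m \<and> v < m \<and> u \<noteq> v) \<longrightarrow> P u v = 0)"

lemma supported_on_clique_labeling_of_perms: "supported_on_clique m (labeling_of_perms m \<pi>)"
  by (simp add: supported_on_clique_def labeling_of_perms_def)

definition relabel :: "nat \<Rightarrow> (nat \<Rightarrow> nat \<Rightarrow> nat) \<Rightarrow> (nat \<Rightarrow> nat) \<Rightarrow> nat \<Rightarrow> nat \<Rightarrow> nat" where
  "relabel m Q \<sigma> = (\<lambda>u v. if u < m \<and> v < m \<and> u \<noteq> v then Q (\<sigma> u) (\<sigma> v) else 0)"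

lemma iso_class_subset_relabel:
  "{P. supported_on_clique m P \<and> iso_labeling m Q P} \<subseteq> relabel m Q ` {\<sigma>. \<sigma> permutes {..<m}}"
proof
  fix P assume "P \<in> {P. supported_on_clique m P \<and> iso_labeling m Q P}"
  then obtain \<sigma> where supp: "supported_on_clique m P" and bij: "bij_betw \<sigma> {..<m} {..<m}"
    and iso: "\<forall>u<m. \<forall>v<m. u \<noteq> v \<longrightarrow> Q (\<sigma> u) (\<sigma> v) = P u v"
    unfolding iso_labeling_def by blast
  define \<sigma>' where "\<sigma>' = (\<lambda>x. if x < m then \<sigma> x else x)"
  have "bij_betw \<sigma>' {..<m} {..<m}"
    using bij by (rule bij_betw_cong[THEN iffD1, rotated]) (auto simp: \<sigma>'_def)
  then have "\<sigma>' permutes {..<m}" by (rule bij_imp_permutes) (auto simp: \<sigma>'_def)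
  moreover have "P = relabel m Q \<sigma>'"
    using iso supp by (auto simp: relabel_def \<sigma>'_def supported_on_clique_def fun_eq_iff)
  ultimately show "P \<in> relabel m Q ` {\<sigma>. \<sigma> permutes {..<m}}" by blast
qed

lemma finite_iso_class: "finite {P. supported_on_clique m P \<and> iso_labeling m Q P}"
  by (rule finite_subset[OF iso_class_subset_relabel]) (simp add: finite_permutations)

lemma card_iso_class_le_fact: "card {P. supported_on_clique m P \<and> iso_labeling m Q P} \<le> fact m"
proof -
  have "card {P. supported_on_clique m P \<and> iso_labeling m Q P}
          \<le> card (relabel m Q ` {\<sigma>. \<sigma> permutes {..<m}})"
    by (intro card_mono finite_imageI iso_class_subset_relabel) (simp add: finite_permutations)
  also have "\<dots> \<le> card {\<sigma>. \<sigma> permutes {..<m}}"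
    by (intro card_image_le) (simp add: finite_permutations)
  also have "\<dots> = fact m" by (rule card_permutations) auto
  finally show ?thesis .
qed

subsection \<open>Few storage snapshots\<close>

text \<open>Decoding sees the whole whiteboard function, so the snapshot also records the
 entries of the nonexistent nodes v \<ge> m; they stay blank by config_in_clique_run.\<close>

definition bounded_snapshots :: "nat \<Rightarrow> nat \<Rightarrow> ((bool \<Rightarrow> nat) \<times> (nat \<Rightarrow> nat)) set" where
  "bounded_snapshots m b =
     {(mem, wb). (\<forall>i. mem i < b) \<and> (\<forall>v. wb v < b) \<and> (\<forall>v. m \<le> v \<longrightarrow> wb v = 0)}"

definition snapshot_of_tuple :: "nat \<Rightarrow> (nat \<times> nat) \<times> (nat \<Rightarrow> nat) \<Rightarrow> (bool \<Rightarrow> nat) \<times> (nat \<Rightarrow> nat)" where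
  "snapshot_of_tuple m = (\<lambda>((x, y), f). ((\<lambda>i. if i then x else y), (\<lambda>v. if v < m then f v else 0)))"

lemma bounded_snapshots_subset_image:
  "bounded_snapshots m b \<subseteq> snapshot_of_tuple m ` (({..<b} \<times> {..<b}) \<times> (\<Pi>\<^sub>E v\<in>{..<m}. {..<b}))"
proof clarify
  fix mem wb assume "(mem, wb) \<in> bounded_snapshots m b"
  then show "(mem, wb) \<in> snapshot_of_tuple m ` (({..<b} \<times> {..<b}) \<times> (\<Pi>\<^sub>E v\<in>{..<m}. {..<b}))"
    by (intro image_eqI[where x = "((mem True, mem False), restrict wb {..<m})"])
       (auto simp: bounded_snapshots_def snapshot_of_tuple_def fun_eq_iff)
qed

lemma finite_bounded_snapshots: "finite (bounded_snapshots m b)"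
  by (rule finite_subset[OF bounded_snapshots_subset_image]) (auto intro: finite_PiE)

lemma card_bounded_snapshots_le: "card (bounded_snapshots m b) \<le> b ^ (m + 2)"
proof -
  let ?T = "({..<b} \<times> {..<b}) \<times> (\<Pi>\<^sub>E v\<in>{..<m}. {..<b})"
  have finite: "finite ?T" by (auto intro: finite_PiE)
  have "card (bounded_snapshots m b) \<le> card (snapshot_of_tuple m ` ?T)"
    by (intro card_mono finite_imageI finite bounded_snapshots_subset_image)
  also have "\<dots> \<le> card ?T" using finite by (rule card_image_le)
  also have "\<dots> = b ^ (m + 2)"
    by (simp add: card_cartesian_product card_PiE power_add power2_eq_square)
  finally show ?thesis .
qed

lemma constructs_map_counting_bound:
  assumes map: "constructs_map m B A sched start" and start: "\<forall>i. start i < m"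
  shows "fact (m - 1) ^ m \<le> (2 ^ B) ^ (m + 2) * (fact m :: nat)"
proof -
  let ?S = "bounded_snapshots m (2 ^ B)"
  let ?class = "\<lambda>s. {P. supported_on_clique m P \<and> iso_labeling m (decode A (fst s) (snd s)) P}"
  have covered: "labeling_of_perms m ` port_perms m \<subseteq> (\<Union>s\<in>?S. ?class s)"
  proof clarify
    fix \<pi> assume "\<pi> \<in> port_perms m"
    define P where "P = labeling_of_perms m \<pi>"
    have valid: "valid_labeling m P"
      unfolding P_def by (rule valid_labeling_of_perms) fact
    from map[unfolded constructs_map_def, rule_format, OF valid] obtain t where
      "\<forall>t i. fst (snd (run A sched start P m t)) i < 2 ^ B"
      "\<forall>t v. snd (snd (run A sched start P m t)) v < 2 ^ B"
      and iso: "iso_labeling m (decode A (fst (snd (run A sched start P m t)))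
                                            (snd (snd (run A sched start P m t)))) P"
      by blast
    moreover have "\<forall>v. m \<le> v \<longrightarrow> snd (snd (run A sched start P m t)) v = 0"
      using config_in_clique_run[OF valid start] by (simp add: config_in_clique_def)
    ultimately have "snd (run A sched start P m t) \<in> ?S"
      by (simp add: bounded_snapshots_def mem_Times_iff)
    moreover have "P \<in> ?class (snd (run A sched start P m t))"
      using iso supported_on_clique_labeling_of_perms by (simp add: P_def)
    ultimately show "labeling_of_perms m \<pi> \<in> (\<Union>s\<in>?S. ?class s)"
      unfolding P_def by blast
  qed
  have "fact (m - 1) ^ m = card (labeling_of_perms m ` port_perms m)"
    by (rule card_labelings_of_perms[symmetric])
  also have "\<dots> \<le> card (\<Union>s\<in>?S. ?class s)"
    by (intro card_mono covered finite_UN_I finite_bounded_snapshots finite_iso_class)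
  also have "\<dots> \<le> (\<Sum>s\<in>?S. card (?class s))"
    by (rule card_UN_le[OF finite_bounded_snapshots])
  also have "\<dots> \<le> card ?S * fact m"
    using sum_bounded_above[of ?S "\<lambda>s. card (?class s)"] card_iso_class_le_fact by simp
  also have "\<dots> \<le> (2 ^ B) ^ (m + 2) * fact m"
    by (intro mult_le_mono1 card_bounded_snapshots_le)
  finally show ?thesis .
qed

lemma power_diff_le_fact: "k \<le> n \<Longrightarrow> k ^ (n - k) \<le> (fact n :: nat)"
proof (induction n)
  case (Suc n)
  show ?case
  proof (cases "k \<le> n")
    case True
    then have "k ^ (Suc n - k) = k * k ^ (n - k)" by (simp add: Suc_diff_le)
    also have "\<dots> \<le> Suc n * fact n" using Suc True by (intro mult_le_mono) auto
    finally show ?thesis by (simp add: fact_Suc)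
  next
    case False
    with Suc.prems have "k = Suc n" by simp
    then show ?thesis using fact_ge_1[of "Suc n", where 'a=nat] by simp
  qed
qed simp

lemma power_le_fact_pred:
  assumes "4 * L + 8 \<le> m"
  shows "m ^ L \<le> (fact (m - 1) :: nat)"
proof -
  define k where "k = (m - 1) div 2"
  have k: "3 \<le> k" "2 * L \<le> k" "k \<le> m - 1 - k" using assms by (auto simp: k_def)
  have "m \<le> 3 * k" using k(1) by (simp add: k_def)
  also have "\<dots> \<le> k * k" using k(1) by (rule mult_le_mono1)
  finally have "m ^ L \<le> (k * k) ^ L" by (rule power_mono) simp
  also have "\<dots> = k ^ (2 * L)" by (simp add: power_mult power2_eq_square)
  also have "\<dots> \<le> k ^ (m - 1 - k)" using k by (intro power_increasing) auto
  also have "\<dots> \<le> fact (m - 1)" by (rule power_diff_le_fact) (simp add: k_def)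
  finally show ?thesis .
qed

lemma fact_mult_power_less_fact_pred_power:
  assumes "4 * (K + 3) + 8 \<le> m"
  shows "fact m * (m ^ K) ^ (m + 2) < (fact (m - 1) :: nat) ^ m"
proof -
  have "fact m * (m ^ K) ^ (m + 2) \<le> m ^ m * (m ^ K) ^ (m + 2)"
    using fact_le_power[of m, where 'a=nat] by (intro mult_le_mono1) simp
  also have "\<dots> = m ^ (m + K * (m + 2))" by (simp add: power_add power_mult)
  also have "\<dots> < m ^ ((K + 3) * m)"
    using assms by (intro power_strict_increasing) (auto simp: algebra_simps)
  also have "\<dots> = (m ^ (K + 3)) ^ m" by (simp add: power_mult)
  also have "\<dots> \<le> fact (m - 1) ^ m"
    by (intro power_mono power_le_fact_pred assms) simp
  finally show ?thesis .
qed

lemma two_power_floor_log_le: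
  fixes c :: real
  assumes "1 \<le> m"
  shows "(2::nat) ^ nat \<lfloor>c * log 2 (real (m ^ 2))\<rfloor> \<le> m ^ nat \<lceil>2 * \<bar>c\<bar>\<rceil>"
proof -
  define B where "B = nat \<lfloor>c * log 2 (real (m ^ 2))\<rfloor>"
  define K where "K = nat \<lceil>2 * \<bar>c\<bar>\<rceil>"
  have log_m: "0 \<le> log 2 (real m)" "log 2 (real (m ^ 2)) = 2 * log 2 (real m)"
    using assms by (simp_all add: log_nat_power)
  have "real B \<le> max 0 (c * log 2 (real (m ^ 2)))" unfolding B_def by linarith
  also have "\<dots> \<le> 2 * \<bar>c\<bar> * log 2 (real m)"
    using log_m by (auto intro!: mult_right_mono simp: abs_if mult_nonpos_nonneg)
  also have "\<dots> \<le> real K * log 2 (real m)"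
    unfolding K_def by (intro mult_right_mono log_m) linarith
  finally have B_le: "real B \<le> real K * log 2 (real m)" .
  have "real (2 ^ B) = 2 powr real B" by (simp add: powr_realpow)
  also have "\<dots> \<le> 2 powr (real K * log 2 (real m))" using B_le by simp
  also have "\<dots> = (2 powr log 2 (real m)) powr real K" by (simp add: powr_powr mult.commute)
  also have "\<dots> = real (m ^ K)" using assms by (simp add: powr_realpow)
  finally show ?thesis unfolding B_def K_def by linarith
qed

theorem lemma1:
  fixes c :: real
  shows "\<exists>N::nat. \<forall>n m::nat. N \<le> n \<and> n = m ^ 2 \<longrightarrow>
           (\<forall>A sched start. (\<forall>i. start i < m) \<longrightarrow>
              \<not> constructs_map m (nat \<lfloor>c * log 2 (real n)\<rfloor>) A sched start)"
proof -
  define K where "K = nat \<lceil>2 * \<bar>c\<bar>\<rceil>"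
  define M where "M = 4 * (K + 3) + 8"
  have "\<not> constructs_map m (nat \<lfloor>c * log 2 (real (m ^ 2))\<rfloor>) A sched start"
    if "M ^ 2 \<le> m ^ 2" and start: "\<forall>i. start i < m" for m A sched start
  proof
    let ?B = "nat \<lfloor>c * log 2 (real (m ^ 2))\<rfloor>"
    have large: "M \<le> m" using that(1) by (rule power2_le_imp_le) simp
    assume "constructs_map m ?B A sched start"
    then have "fact (m - 1) ^ m \<le> (2 ^ ?B) ^ (m + 2) * (fact m :: nat)"
      using start by (rule constructs_map_counting_bound)
    also have "\<dots> \<le> (m ^ K) ^ (m + 2) * fact m"
      unfolding K_def using large
      by (intro mult_le_mono1 power_mono two_power_floor_log_le) (auto simp: M_def)
    also have "\<dots> < fact (m - 1) ^ m"
      using fact_mult_power_less_fact_pred_power[of K m] large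
      by (simp add: M_def mult.commute)
    finally show False by simp
  qed
  then show ?thesis by blast
qed

end
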